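(* For every positive integer $N\notin\{1,3\}$, the taxman game on $\{1,\dots,N\}$ can be won: there is a legal move sequence for which the player's final score is strictly greater than the taxman's final total, i.e., strictly greater than $N(N+1)/4$.
   Context: The taxman game on $\{1,\dots,N\}$: initially all integers $1,\dots,N$ are in play. A move consists of picking a number $p$ still in play that has at least one proper divisor still in play; the player adds $p$ to their score, $p$ is removed, and the taxman removes all proper divisors of $p$ still in play and adds them to the taxman's total. When no legal picks remain, the taxman adds all numbers still in play to the taxman's total. The player wins if their final score exceeds the taxman's final total. *)

theory Defs
  imports Main
begin

definition proper_divs_in :: "nat set \<Rightarrow> nat \<Rightarrow> nat set" where
  "proper_divs_in S p = {d \<in> S. d dvd p \<and> d \<noteq> p}"

definition legal_pick :: "nat set \<Rightarrow> nat \<Rightarrow> bool" where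
  "legal_pick S p \<longleftrightarrow> p \<in> S \<and> proper_divs_in S p \<noteq> {}"

definition after_pick :: "nat set \<Rightarrow> nat \<Rightarrow> nat set" where
  "after_pick S p = S - {p} - proper_divs_in S p"

fun legal_seq :: "nat set \<Rightarrow> nat list \<Rightarrow> bool" where
  "legal_seq S [] = True"
| "legal_seq S (p # ps) = (legal_pick S p \<and> legal_seq (after_pick S p) ps)"

fun final_state :: "nat set \<Rightarrow> nat list \<Rightarrow> nat set" where
  "final_state S [] = S"
| "final_state S (p # ps) = final_state (after_pick S p) ps"

definition player_score :: "nat list \<Rightarrow> nat" where
  "player_score ps = sum_list ps"

fun taxman_total :: "nat set \<Rightarrow> nat list \<Rightarrow> nat" where
  "taxman_total S [] = \<Sum>S"
| "taxman_total S (p # ps) = \<Sum>(proper_divs_in S p) + taxman_total (after_pick S p) ps"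

definition complete_game :: "nat \<Rightarrow> nat list \<Rightarrow> bool" where
  "complete_game N ps \<longleftrightarrow> legal_seq {1..N} ps \<and>
     (\<forall>q. \<not> legal_pick (final_state {1..N} ps) q)"

end

theory Submission
  imports Defs Complex_Main
begin

text \<open>The player picks, in four phases: the even numbers in (N/8, N/6] and the multiples of 4
  in (N/6, N/4], with witness p/2; the odd multiples of 5 but not of 3 in (N/2, N], with witness
  p/5; the odd multiples of 3 in (3N/5, N] and of 9 in (N/2, 3N/5], with witness p/3; the even
  numbers in (2N/3, N] and those in (N/2, 2N/3] divisible by 4 (witness p/2) or congruent to 6
  mod 12 (witness p/3). The witness of a pick is a proper divisor dividing no earlier pick, so it
  is still in play and the pick is legal. Each class is a union of arithmetic progressions, so the
  score has a closed form, roughly 0.26 N^2 > N^2/4: a quadratic estimate settles N >= 459,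
  evaluating the closed form settles the smaller N except thirteen, and these are won by explicit
  games. Since the player and the taxman share 1 + ... + N, a score above N(N+1)/4 wins once the
  game is played to the end.\<close>

lemma after_pick_eq: "after_pick S p = {d \<in> S. \<not> d dvd p}"
  unfolding after_pick_def proper_divs_in_def by auto

lemma legal_seq_append:
  "legal_seq S (ps @ qs) \<longleftrightarrow> legal_seq S ps \<and> legal_seq (final_state S ps) qs"
  by (induction ps arbitrary: S) auto

lemma final_state_append: "final_state S (ps @ qs) = final_state (final_state S ps) qs"
  by (induction ps arbitrary: S) auto

lemma final_state_subset: "final_state S ps \<subseteq> S"
  by (induction ps arbitrary: S) (auto simp: after_pick_def)

lemma taxman_total_plus_player_score:
  assumes "finite S" "legal_seq S ps"
  shows "taxman_total S ps + player_score ps = \<Sum>S"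
  using assms
proof (induction ps arbitrary: S)
  case Nil
  then show ?case by (simp add: player_score_def)
next
  case (Cons p ps)
  have "p \<in> S"
    using Cons.prems(2) by (simp add: legal_pick_def)
  then have split: "S = insert p (proper_divs_in S p \<union> after_pick S p)"
    unfolding after_pick_def proper_divs_in_def by auto
  have "finite (after_pick S p)" "finite (proper_divs_in S p)"
    using Cons.prems(1) unfolding after_pick_def proper_divs_in_def by simp_all
  moreover have "p \<notin> proper_divs_in S p \<union> after_pick S p"
    and "proper_divs_in S p \<inter> after_pick S p = {}"
    unfolding after_pick_def proper_divs_in_def by auto
  ultimately have "\<Sum>S = p + \<Sum>(proper_divs_in S p) + \<Sum>(after_pick S p)"
    by (subst split) (simp add: sum.union_disjoint)
  moreover have "taxman_total (after_pick S p) ps + player_score ps = \<Sum>(after_pick S p)"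
    using Cons.IH \<open>finite (after_pick S p)\<close> Cons.prems(2) by simp
  ultimately show ?case by (simp add: player_score_def)
qed

lemma legal_seq_extends_to_end:
  assumes "finite S"
  shows "\<exists>qs. legal_seq S qs \<and> (\<forall>q. \<not> legal_pick (final_state S qs) q)"
  using assms
proof (induction "card S" arbitrary: S rule: less_induct)
  case less
  show ?case
  proof (cases "\<exists>q. legal_pick S q")
    case False
    then show ?thesis by (intro exI[of _ "[]"]) simp
  next
    case True
    then obtain q where q: "legal_pick S q" by blast
    then have "after_pick S q \<subset> S"
      by (auto simp: legal_pick_def after_pick_def)
    then have "card (after_pick S q) < card S" "finite (after_pick S q)"
      using less.prems by (auto intro: psubset_card_mono finite_subset)
    with less.hyps obtain qs where
      "legal_seq (after_pick S q) qs" "\<forall>r. \<not> legal_pick (final_state (after_pick S q) qs) r"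
      by blast
    with q show ?thesis by (intro exI[of _ "q # qs"]) simp
  qed
qed

lemma winning_complete_game_of_legal_seq:
  assumes "legal_seq {1..N} ps" "N * (N + 1) < 4 * player_score ps"
  shows "\<exists>ps. complete_game N ps \<and>
           player_score ps > taxman_total {1..N} ps \<and>
           4 * player_score ps > N * (N + 1)"
proof -
  obtain qs where qs: "legal_seq (final_state {1..N} ps) qs"
     "\<forall>q. \<not> legal_pick (final_state (final_state {1..N} ps) qs) q"
    using legal_seq_extends_to_end finite_subset[OF final_state_subset] by blast
  let ?game = "ps @ qs"
  have legal: "legal_seq {1..N} ?game"
    using assms(1) qs(1) by (simp add: legal_seq_append)
  have complete: "complete_game N ?game"
    unfolding complete_game_def using legal qs(2) by (simp add: final_state_append)
  have score: "4 * player_score ?game > N * (N + 1)"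
    using assms(2) by (simp add: player_score_def)
  have "2 * \<Sum>{1..N} = N * (N + 1)"
    by (simp add: Sum_Icc_nat)
  moreover have "taxman_total {1..N} ?game + player_score ?game = \<Sum>{1..N}"
    using taxman_total_plus_player_score legal by blast
  ultimately have "player_score ?game > taxman_total {1..N} ?game"
    using score by linarith
  with complete score show ?thesis by blast
qed

text \<open>A pick is legal as long as its witness, a proper divisor, is still in play; the
  witness of a later pick must therefore not divide an earlier pick.\<close>

lemma legal_seq_witnessed:
  assumes "\<forall>(p, w) \<in> set pws. p \<in> S \<and> w \<in> S \<and> w dvd p \<and> w \<noteq> p"
    and "sorted_wrt (\<lambda>(p, _) (_, w). \<not> w dvd p) pws"
  shows "legal_seq S (map fst pws)"
  using assms
proof (induction pws arbitrary: S)
  case Nil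
  then show ?case by simp
next
  case (Cons pw pws)
  obtain p w where pw: "pw = (p, w)" by fastforce
  have "legal_pick S p"
    using Cons.prems(1) pw unfolding legal_pick_def proper_divs_in_def by auto
  moreover have "\<forall>(q, v) \<in> set pws. q \<in> after_pick S p \<and> v \<in> after_pick S p \<and> v dvd q \<and> v \<noteq> q"
    using Cons.prems pw by (fastforce simp: after_pick_eq dest: dvd_trans)
  then have "legal_seq (after_pick S p) (map fst pws)"
    using Cons.IH Cons.prems(2) by simp
  ultimately show ?case using pw by simp
qed

definition progression :: "nat \<Rightarrow> nat \<Rightarrow> nat \<Rightarrow> nat \<Rightarrow> nat set" where
  "progression m r lo hi = {p. lo < p \<and> p \<le> hi \<and> p mod m = r}"

text \<open>The numbers p \<le> x with p mod m = r are m * j + r for j < (x + m - r) div m.\<close>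

definition progression_prefix_sum :: "nat \<Rightarrow> nat \<Rightarrow> nat \<Rightarrow> nat" where
  "progression_prefix_sum m r x =
     (let c = (x + m - r) div m in m * (c * (c - 1) div 2) + r * c)"

definition progression_sum :: "nat \<Rightarrow> nat \<Rightarrow> nat \<Rightarrow> nat \<Rightarrow> nat" where
  "progression_sum m r lo hi = progression_prefix_sum m r hi - progression_prefix_sum m r lo"

lemma progression_prefix_sum_eq:
  assumes "r < m"
  shows "progression_prefix_sum m r x = \<Sum>{p. p \<le> x \<and> p mod m = r}"
proof -
  define c where "c = (x + m - r) div m"
  have m0: "0 < m" using assms by simp
  have "{p. p \<le> x \<and> p mod m = r} = (\<lambda>j. m * j + r) ` {..<c}"
  proof (intro set_eqI iffI)
    fix p assume p: "p \<in> {p. p \<le> x \<and> p mod m = r}"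
    then have p_eq: "p = m * (p div m) + r"
      using div_mult_mod_eq[of p m] by (simp add: mult.commute)
    have "Suc (p div m) * m \<le> x + m - r"
      using p p_eq by (simp add: algebra_simps) linarith
    then have "Suc (p div m) \<le> c"
      unfolding c_def using m0 by (simp add: less_eq_div_iff_mult_less_eq)
    then show "p \<in> (\<lambda>j. m * j + r) ` {..<c}"
      using p_eq by force
  next
    fix p assume "p \<in> (\<lambda>j. m * j + r) ` {..<c}"
    then obtain j where j: "j < c" "p = m * j + r" by auto
    have "Suc j * m \<le> x + m - r"
      using j(1) m0 unfolding c_def by (simp add: less_eq_div_iff_mult_less_eq Suc_le_eq[symmetric])
    then show "p \<in> {p. p \<le> x \<and> p mod m = r}"
      using j(2) assms by (simp add: algebra_simps)
  qed
  moreover have "inj_on (\<lambda>j. m * j + r) {..<c}"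
    using m0 by (auto simp: inj_on_def)
  ultimately have "\<Sum>{p. p \<le> x \<and> p mod m = r} = (\<Sum>j<c. m * j + r)"
    by (simp add: sum.reindex)
  also have "\<dots> = m * \<Sum>{..<c} + r * c"
    by (simp add: sum.distrib sum_distrib_left)
  also have "\<Sum>{..<c} = c * (c - 1) div 2"
    using Sum_Icc_nat[of 0 "c - 1"] by (cases c) (simp_all add: lessThan_Suc_atMost atLeast0AtMost)
  finally show ?thesis
    by (simp add: progression_prefix_sum_def c_def Let_def)
qed

lemma progression_prefix_sum_mono:
  "r < m \<Longrightarrow> lo \<le> hi \<Longrightarrow> progression_prefix_sum m r lo \<le> progression_prefix_sum m r hi"
  unfolding progression_prefix_sum_eq by (rule sum_mono2) auto

lemma sum_progression:
  assumes "r < m" "lo \<le> hi"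
  shows "\<Sum>(progression m r lo hi) = progression_sum m r lo hi"
proof -
  have "progression m r lo hi = {p. p \<le> hi \<and> p mod m = r} - {p. p \<le> lo \<and> p mod m = r}"
    unfolding progression_def by auto
  moreover have "{p. p \<le> lo \<and> p mod m = r} \<subseteq> {p. p \<le> hi \<and> p mod m = r}"
    using assms by auto
  ultimately show ?thesis
    using assms by (simp add: progression_sum_def progression_prefix_sum_eq sum_diff_nat finite_subset)
qed

lemma finite_progression: "finite (progression m r lo hi)"
  unfolding progression_def by (rule finite_subset[of _ "{..hi}"]) auto

text \<open>Completing the square: with c terms, 2m times the prefix sum is s^2 - (r - m/2)^2
  for s = m c + r - m/2, the midpoint between the last term and the next one.\<close>

lemma progression_prefix_sum_real:
  assumes "r < m"
  shows "2 * real m * real (progression_prefix_sum m r x) =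
    (real m * real ((x + m - r) div m) + real r - real m / 2)\<^sup>2 - (real r - real m / 2)\<^sup>2"
proof -
  define c where "c = (x + m - r) div m"
  have "even (c * (c - 1))"
    by (cases c) simp_all
  then have "2 * (c * (c - 1) div 2) = c * (c - 1)"
    by simp
  moreover have "real (c * (c - 1)) = real c * real c - real c"
    by (cases c) (auto simp: algebra_simps)
  ultimately have triangle: "real (c * (c - 1) div 2) = (real c * real c - real c) / 2"
    by (metis of_nat_mult of_nat_numeral nonzero_mult_div_cancel_left zero_neq_numeral)
  show ?thesis
    unfolding progression_prefix_sum_def c_def[symmetric] Let_def of_nat_add of_nat_mult triangle
    by (simp add: power2_eq_square field_simps)
qed

lemma progression_sum_lower_bound:
  fixes a b :: real
  assumes "r < m" "lo \<le> hi" "0 \<le> a" "a \<le> real hi + 1 - real m / 2" "real lo + real m / 2 \<le> b"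
  shows "a\<^sup>2 - b\<^sup>2 \<le> 2 * real m * real (progression_sum m r lo hi)"
proof -
  define s where "s c = real m * real c + real r - real m / 2" for c
  define ch cl where "ch = (hi + m - r) div m" and "cl = (lo + m - r) div m"
  have "hi + m - r < m * ch + m"
    using assms(1) mult_div_mod_eq[of m "hi + m - r"] mod_less_divisor[of m "hi + m - r"]
    unfolding ch_def by linarith
  then have "real hi + 1 \<le> real m * real ch + real r"
    using assms(1) by (simp flip: of_nat_mult of_nat_add)
  then have upper: "a\<^sup>2 \<le> (s ch)\<^sup>2"
    using assms(3,4) unfolding s_def by (intro power_mono) linarith+
  have "m * cl \<le> lo + m - r"
    unfolding cl_def by (simp add: mult.commute)
  then have "m * cl + r \<le> lo + m"
    using assms(1) by linarith
  then have "real m * real cl + real r \<le> real lo + real m"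
    by (metis of_nat_add of_nat_le_iff of_nat_mult)
  moreover have "0 \<le> real m * real cl" "0 \<le> real r" "0 \<le> real lo"
    by simp_all
  ultimately have "\<bar>s cl\<bar> \<le> b"
    using assms(5) unfolding s_def abs_le_iff by linarith
  then have lower: "(s cl)\<^sup>2 \<le> b\<^sup>2"
    by (metis abs_ge_zero abs_le_square_iff abs_of_nonneg order_trans)
  have "2 * real m * real (progression_sum m r lo hi) = (s ch)\<^sup>2 - (s cl)\<^sup>2"
    using progression_prefix_sum_mono[OF assms(1,2)]
    by (simp add: progression_sum_def of_nat_diff right_diff_distrib s_def ch_def cl_def
        progression_prefix_sum_real[OF assms(1)])
  with upper lower show ?thesis
    by linarith
qed

lemma of_nat_div_lower_bound: "0 < d \<Longrightarrow> (real n + 1) / real d - 1 \<le> real (n div d)"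
proof -
  assume "0 < d"
  then have "n + 1 \<le> d * (n div d) + d"
    using mult_div_mod_eq[of d n] mod_less_divisor[of d n] by linarith
  then have "real n + 1 \<le> real d * real (n div d) + real d"
    by (metis of_nat_add of_nat_le_iff of_nat_mult of_nat_1)
  with \<open>0 < d\<close> show ?thesis
    by (simp add: field_simps)
qed

lemma progression_sum_div_lower_bound:
  fixes N k d k' d' :: nat
  assumes "r < m" "0 < d" "k' * N div d' \<le> k * N div d"
    and "real m * real d \<le> 2 * (real k * real N + 1)"
  shows "((real k * real N + 1) / real d - real m / 2)\<^sup>2 - (real k' * real N / real d' + real m / 2)\<^sup>2
    \<le> 2 * real m * real (progression_sum m r (k' * N div d') (k * N div d))"
proof (rule progression_sum_lower_bound[OF assms(1,3)])
  show "0 \<le> (real k * real N + 1) / real d - real m / 2"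
    using assms(2,4) by (simp add: field_simps)
  show "(real k * real N + 1) / real d - real m / 2 \<le> real (k * N div d) + 1 - real m / 2"
    using of_nat_div_lower_bound[OF assms(2), of "k * N"] by simp
  show "real (k' * N div d') + real m / 2 \<le> real k' * real N / real d' + real m / 2"
    using of_nat_div_le_of_nat[of "k' * N" d'] by simp
qed

definition low_pick :: "nat \<Rightarrow> nat \<Rightarrow> bool" where
  "low_pick N p \<longleftrightarrow> (N < 8 * p \<and> 6 * p \<le> N \<and> even p) \<or> (N < 6 * p \<and> 4 * p \<le> N \<and> 4 dvd p)"

definition five_pick :: "nat \<Rightarrow> nat \<Rightarrow> bool" where
  "five_pick N p \<longleftrightarrow> N < 2 * p \<and> p \<le> N \<and> odd p \<and> 5 dvd p \<and> \<not> 3 dvd p"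

definition three_pick :: "nat \<Rightarrow> nat \<Rightarrow> bool" where
  "three_pick N p \<longleftrightarrow> odd p \<and> 3 dvd p \<and>
     ((3 * N < 5 * p \<and> p \<le> N) \<or> (N < 2 * p \<and> 5 * p \<le> 3 * N \<and> 9 dvd p))"

definition even_pick :: "nat \<Rightarrow> nat \<Rightarrow> bool" where
  "even_pick N p \<longleftrightarrow> even p \<and>
     ((2 * N < 3 * p \<and> p \<le> N) \<or> (N < 2 * p \<and> 3 * p \<le> 2 * N \<and> (4 dvd p \<or> 3 dvd p)))"

definition strategy_pick :: "nat \<Rightarrow> nat \<Rightarrow> bool" where
  "strategy_pick N p \<longleftrightarrow> low_pick N p \<or> five_pick N p \<or> three_pick N p \<or> even_pick N p"

definition witness :: "nat \<Rightarrow> nat \<Rightarrow> nat" where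
  "witness N y =
     (if 2 * y \<le> N then y div 2
      else if odd y then (if 3 dvd y then y div 3 else y div 5)
      else if \<not> 4 dvd y \<and> 3 * y \<le> 2 * N then y div 3 else y div 2)"

definition phase :: "nat \<Rightarrow> nat \<Rightarrow> nat" where
  "phase N p = (if 2 * p \<le> N then 0 else if odd p \<and> \<not> 3 dvd p then 1 else if odd p then 2 else 3)"

definition picked_before :: "nat \<Rightarrow> nat \<Rightarrow> nat \<Rightarrow> bool" where
  "picked_before N x y \<longleftrightarrow> phase N x < phase N y \<or> (phase N x = phase N y \<and> x < y)"

lemma strategy_pick_cases:
  assumes "strategy_pick N p"
  obtains (low) "low_pick N p" "2 * p \<le> N" "phase N p = 0"
    | (five) "five_pick N p" "N < 2 * p" "phase N p = 1"
    | (three) "three_pick N p" "N < 2 * p" "phase N p = 2"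
    | (even) "even_pick N p" "N < 2 * p" "phase N p = 3"
  using assms unfolding strategy_pick_def
  by (elim disjE) (auto simp: phase_def low_pick_def five_pick_def three_pick_def even_pick_def)

lemma strategy_pick_phase:
  assumes "strategy_pick N p"
  shows "phase N p = 0 \<Longrightarrow> low_pick N p"
    and "phase N p = 1 \<Longrightarrow> five_pick N p"
    and "phase N p = 2 \<Longrightarrow> three_pick N p"
    and "phase N p = 3 \<Longrightarrow> even_pick N p"
  using assms by (cases rule: strategy_pick_cases; simp)+

lemma strategy_pick_range: "strategy_pick N p \<Longrightarrow> 0 < p \<and> p \<le> N"
  unfolding strategy_pick_def low_pick_def five_pick_def three_pick_def even_pick_def by auto

lemma witness_proper_divisor:
  assumes "strategy_pick N y"
  shows "witness N y dvd y \<and> 0 < witness N y \<and> witness N y < y"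
  using assms
proof (cases rule: strategy_pick_cases)
  case low
  then have "even y" "0 < y"
    unfolding low_pick_def by (auto intro: dvd_trans[of 2 4])
  with low show ?thesis unfolding witness_def by auto
next
  case five
  then show ?thesis unfolding witness_def five_pick_def by auto
next
  case three
  then show ?thesis unfolding witness_def three_pick_def by auto
next
  case even
  then show ?thesis unfolding witness_def even_pick_def by auto
qed

text \<open>An earlier pick x that is a multiple t * k of the witness k of a later pick y is excluded:
  the size constraints of the classes leave only a few values of t, each excluded by parity
  or divisibility.\<close>

lemma multiple_factor_less: "x = k * t \<Longrightarrow> a * x < b * k \<Longrightarrow> a * t < (b::nat)"
  by (metis mult.commute mult.left_commute mult_less_cancel2)

lemma low_witness_not_dvd_earlier:
  assumes "strategy_pick N x" "low_pick N y" "picked_before N x y" "x = witness N y * t"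
  shows False
proof -
  define k where "k = witness N y"
  have y: "2 * y \<le> N" "phase N y = 0"
    using assms(2) by (auto simp: low_pick_def phase_def)
  then have k: "y = 2 * k" "N < 16 * k" "8 * k \<le> N"
    using assms(2) by (auto simp: k_def witness_def low_pick_def)
  have x: "x = k * t" "0 < t"
    using assms(4) strategy_pick_range[OF assms(1)] unfolding k_def by (auto intro: gr0I)
  have "phase N x = 0" "x < y"
    using assms(3) y by (auto simp: picked_before_def less_Suc_eq eval_nat_numeral)
  then have "N < 8 * x"
    using strategy_pick_phase(1)[OF assms(1)] by (auto simp: low_pick_def)
  have "t < 2"
    using multiple_factor_less[OF x(1), of 1 2] \<open>x < y\<close> k by simp
  then have "t = 1"
    using x(2) by simp
  with \<open>N < 8 * x\<close> x k show False
    by simp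
qed

lemma five_witness_not_dvd_earlier:
  assumes "strategy_pick N x" "five_pick N y" "picked_before N x y" "x = witness N y * t"
  shows False
proof -
  define k where "k = witness N y"
  have y: "N < 2 * y" "phase N y = 1"
    using assms(2) by (auto simp: five_pick_def phase_def)
  then have k: "y = 5 * k" "N < 10 * k" "5 * k \<le> N" "odd k" "\<not> 3 dvd k"
    using assms(2) by (auto simp: k_def witness_def five_pick_def)
  have x: "x = k * t" "0 < t"
    using assms(4) strategy_pick_range[OF assms(1)] unfolding k_def by (auto intro: gr0I)
  consider "phase N x = 0" | "phase N x = 1" "x < y"
    using assms(3) y by (auto simp: picked_before_def less_Suc_eq eval_nat_numeral)
  then show False
  proof cases
    case 1
    then have pick: "low_pick N x"
      using strategy_pick_phase(1)[OF assms(1)] by simp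
    have "4 * t < 10"
      using pick multiple_factor_less[OF x(1), of 4 10] k by (auto simp: low_pick_def)
    then have "t = 1 \<or> t = 2"
      using x(2) by auto
    then show False
      using pick x k by (auto simp: low_pick_def)
  next
    case 2
    then have pick: "five_pick N x"
      using strategy_pick_phase(2)[OF assms(1)] by simp
    have "t < 5"
      using multiple_factor_less[OF x(1), of 1 5] 2 k by simp
    then have "t = 1 \<or> t = 2 \<or> t = 3 \<or> t = 4"
      using x(2) by auto
    then show False
      using pick x k by (auto simp: five_pick_def)
  qed
qed

lemma three_witness_not_dvd_earlier:
  assumes "strategy_pick N x" "three_pick N y" "picked_before N x y" "x = witness N y * t"
  shows False
proof -
  define k where "k = witness N y"
  have y: "N < 2 * y" "phase N y = 2"
    using assms(2) by (auto simp: three_pick_def phase_def)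
  then have y3: "y = 3 * k"
    using assms(2) by (auto simp: k_def witness_def three_pick_def)
  then have k: "N < 6 * k" "3 * k \<le> N" "odd k" "N < 5 * k \<or> 3 dvd k"
    using assms(2) by (auto simp: three_pick_def)
  have x: "x = k * t" "0 < t"
    using assms(4) strategy_pick_range[OF assms(1)] unfolding k_def by (auto intro: gr0I)
  consider "phase N x = 0" | "phase N x = 1" | "phase N x = 2" "x < y"
    using assms(3) y by (auto simp: picked_before_def less_Suc_eq eval_nat_numeral)
  then show False
  proof cases
    case 1
    then have pick: "low_pick N x"
      using strategy_pick_phase(1)[OF assms(1)] by simp
    have "4 * t < 6"
      using pick multiple_factor_less[OF x(1), of 4 6] k by (auto simp: low_pick_def)
    then have "t = 1"
      using x(2) by auto
    then show False
      using pick x k by (auto simp: low_pick_def)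
  next
    case 2
    then have pick: "five_pick N x"
      using strategy_pick_phase(2)[OF assms(1)] by simp
    have "t < 6"
      using pick multiple_factor_less[OF x(1), of 1 6] k by (auto simp: five_pick_def)
    then have "t = 1 \<or> t = 2 \<or> t = 3 \<or> t = 4 \<or> t = 5"
      using x(2) by auto
    then show False
      using pick x k by (auto simp: five_pick_def)
  next
    case 3
    then have pick: "three_pick N x"
      using strategy_pick_phase(3)[OF assms(1)] by simp
    have "t < 3"
      using multiple_factor_less[OF x(1), of 1 3] 3 y3 by simp
    then have "t = 1 \<or> t = 2"
      using x(2) by auto
    then show False
      using pick x k by (auto simp: three_pick_def)
  qed
qed

lemma even_witness_not_dvd_earlier:
  assumes "strategy_pick N x" "even_pick N y" "picked_before N x y" "x = witness N y * t"
  shows False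
proof -
  define k where "k = witness N y"
  have y: "N < 2 * y" "phase N y = 3"
    using assms(2) by (auto simp: even_pick_def phase_def)
  have x: "x = k * t" "0 < t"
    using assms(4) strategy_pick_range[OF assms(1)] unfolding k_def by (auto intro: gr0I)
  consider "phase N x = 0" | "phase N x = 1" | "phase N x = 2" | "phase N x = 3" "x < y"
    using assms(3) y by (auto simp: picked_before_def less_Suc_eq eval_nat_numeral)
  note cases = this
  show False
  proof (cases "\<not> 4 dvd y \<and> 3 * y \<le> 2 * N")
    case True
    then have y3: "y = 3 * k"
      using assms(2) y by (auto simp: k_def witness_def even_pick_def)
    then have k: "N < 6 * k" "9 * k \<le> 2 * N" "even k" "\<not> 4 dvd k"
      using True assms(2) y by (auto simp: even_pick_def)
    from cases show False
    proof cases
      case 1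
      then have pick: "low_pick N x"
        using strategy_pick_phase(1)[OF assms(1)] by simp
      have "4 * t < 6"
        using pick multiple_factor_less[OF x(1), of 4 6] k by (auto simp: low_pick_def)
      then have "t = 1"
        using x(2) by auto
      then show False
        using pick x k by (auto simp: low_pick_def)
    next
      case 2
      then show False
        using strategy_pick_phase(2)[OF assms(1)] x k by (auto simp: five_pick_def)
    next
      case 3
      then show False
        using strategy_pick_phase(3)[OF assms(1)] x k by (auto simp: three_pick_def)
    next
      case 4
      then have pick: "even_pick N x"
        using strategy_pick_phase(4)[OF assms(1)] by simp
      have "t < 3"
        using multiple_factor_less[OF x(1), of 1 3] 4 y3 by simp
      then have "t = 1 \<or> t = 2"
        using x(2) by auto
      then show False
        using pick x k by (auto simp: even_pick_def)
    qed
  next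
    case False
    then have y2: "y = 2 * k"
      using assms(2) y by (auto simp: k_def witness_def even_pick_def)
    then have k: "N < 4 * k" "2 * k \<le> N" "even k \<or> N < 3 * k"
      using False assms(2) y by (auto simp: even_pick_def)
    from cases show False
    proof cases
      case 1
      then have "low_pick N x"
        using strategy_pick_phase(1)[OF assms(1)] by simp
      then have "4 * t < 4"
        using multiple_factor_less[OF x(1), of 4 4] k by (auto simp: low_pick_def)
      then show False
        using x by simp
    next
      case 2
      then have pick: "five_pick N x"
        using strategy_pick_phase(2)[OF assms(1)] by simp
      have "t < 4"
        using pick multiple_factor_less[OF x(1), of 1 4] k by (auto simp: five_pick_def)
      then have "t = 1 \<or> t = 2 \<or> t = 3"
        using x(2) by auto
      then show False
        using pick x k by (auto simp: five_pick_def)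
    next
      case 3
      then have pick: "three_pick N x"
        using strategy_pick_phase(3)[OF assms(1)] by simp
      have "t < 4"
        using pick multiple_factor_less[OF x(1), of 1 4] k by (auto simp: three_pick_def)
      then have "t = 1 \<or> t = 2 \<or> t = 3"
        using x(2) by auto
      then show False
        using pick x k by (auto simp: three_pick_def)
    next
      case 4
      then have pick: "even_pick N x"
        using strategy_pick_phase(4)[OF assms(1)] by simp
      have "t < 2"
        using multiple_factor_less[OF x(1), of 1 2] 4 y2 by simp
      then have "t = 1"
        using x(2) by auto
      then show False
        using pick x k by (auto simp: even_pick_def)
    qed
  qed
qed

lemma witness_not_dvd_earlier_pick:
  assumes "strategy_pick N x" "strategy_pick N y" "picked_before N x y"
  shows "\<not> witness N y dvd x"
proof
  assume "witness N y dvd x"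
  then obtain t where "x = witness N y * t" ..
  with assms show False
    unfolding strategy_pick_def[of N y]
    by (metis low_witness_not_dvd_earlier five_witness_not_dvd_earlier
        three_witness_not_dvd_earlier even_witness_not_dvd_earlier)
qed

definition picks_upto :: "nat \<Rightarrow> (nat \<Rightarrow> bool) \<Rightarrow> nat list" where
  "picks_upto N P = filter P [1..<N + 1]"

definition strategy :: "nat \<Rightarrow> nat list" where
  "strategy N = picks_upto N (low_pick N) @ picks_upto N (five_pick N) @
     picks_upto N (three_pick N) @ picks_upto N (even_pick N)"

lemma set_picks_upto: "set (picks_upto N P) = {p. 1 \<le> p \<and> p \<le> N \<and> P p}"
  unfolding picks_upto_def by auto

lemma sum_list_picks_upto: "sum_list (picks_upto N P) = \<Sum>{p. 1 \<le> p \<and> p \<le> N \<and> P p}"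
proof -
  have "distinct (picks_upto N P)"
    unfolding picks_upto_def by (simp del: upt_Suc)
  then have "sum_list (picks_upto N P) = (\<Sum>p \<in> set (picks_upto N P). p)"
    using sum_list_distinct_conv_sum_set[of "picks_upto N P" "\<lambda>p. p"] by simp
  then show ?thesis
    by (simp add: set_picks_upto)
qed

lemma strategy_pick_of_mem_strategy: "x \<in> set (strategy N) \<Longrightarrow> strategy_pick N x"
  unfolding strategy_def strategy_pick_def by (auto simp: set_picks_upto)

lemma phase_low: "low_pick N p \<Longrightarrow> phase N p = 0"
  and phase_five: "five_pick N p \<Longrightarrow> phase N p = 1"
  and phase_three: "three_pick N p \<Longrightarrow> phase N p = 2"
  and phase_even: "even_pick N p \<Longrightarrow> phase N p = 3"
  unfolding phase_def low_pick_def five_pick_def three_pick_def even_pick_def by auto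

lemma sorted_picks_upto:
  assumes "\<And>p. P p \<Longrightarrow> phase N p = c"
  shows "sorted_wrt (picked_before N) (picks_upto N P)"
proof -
  have "sorted_wrt (<) (picks_upto N P)"
    unfolding picks_upto_def by (intro sorted_wrt_filter sorted_wrt_upt)
  then show ?thesis
    by (rule sorted_wrt_mono_rel[rotated])
      (auto simp: picked_before_def set_picks_upto assms)
qed

lemma sorted_strategy: "sorted_wrt (picked_before N) (strategy N)"
  unfolding strategy_def sorted_wrt_append
  by (auto intro!: sorted_picks_upto simp: set_picks_upto picked_before_def
      phase_low phase_five phase_three phase_even)

lemma legal_seq_strategy: "legal_seq {1..N} (strategy N)"
proof -
  let ?pws = "map (\<lambda>y. (y, witness N y)) (strategy N)"
  have "\<forall>(p, w) \<in> set ?pws. p \<in> {1..N} \<and> w \<in> {1..N} \<and> w dvd p \<and> w \<noteq> p"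
    using witness_proper_divisor strategy_pick_range strategy_pick_of_mem_strategy
    by fastforce
  moreover have "sorted_wrt (\<lambda>(p, _) (_, w). \<not> w dvd p) ?pws"
    unfolding sorted_wrt_map using sorted_strategy
    by (rule sorted_wrt_mono_rel[rotated])
      (auto dest: witness_not_dvd_earlier_pick strategy_pick_of_mem_strategy)
  ultimately have "legal_seq {1..N} (map fst ?pws)"
    by (rule legal_seq_witnessed)
  then show ?thesis
    by (simp add: comp_def)
qed

definition strategy_score :: "nat \<Rightarrow> nat" where
  "strategy_score N =
     progression_sum 2 0 (N div 8) (N div 6) + progression_sum 4 0 (N div 6) (N div 4) +
     progression_sum 30 5 (N div 2) N + progression_sum 30 25 (N div 2) N +
     progression_sum 6 3 (3 * N div 5) N + progression_sum 18 9 (N div 2) (3 * N div 5) +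
     progression_sum 2 0 (2 * N div 3) N + progression_sum 4 0 (N div 2) (2 * N div 3) +
     progression_sum 12 6 (N div 2) (2 * N div 3)"

lemmas div_numeral_iff =
  div_less_iff_less_mult[OF zero_less_numeral] less_eq_div_iff_mult_less_eq[OF zero_less_numeral]

lemma low_picks_eq:
  "{p. 1 \<le> p \<and> p \<le> N \<and> low_pick N p} =
     progression 2 0 (N div 8) (N div 6) \<union> progression 4 0 (N div 6) (N div 4)"
  unfolding progression_def low_pick_def by (auto simp: div_numeral_iff dvd_eq_mod_eq_0)

lemma five_picks_eq:
  "{p. 1 \<le> p \<and> p \<le> N \<and> five_pick N p} =
     progression 30 5 (N div 2) N \<union> progression 30 25 (N div 2) N"
proof (rule set_eqI)
  fix p :: nat
  have "odd p \<and> 5 dvd p \<and> \<not> 3 dvd p \<longleftrightarrow> p mod 30 = 5 \<or> p mod 30 = 25"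
    by presburger
  then show "p \<in> {p. 1 \<le> p \<and> p \<le> N \<and> five_pick N p} \<longleftrightarrow>
      p \<in> progression 30 5 (N div 2) N \<union> progression 30 25 (N div 2) N"
    unfolding progression_def five_pick_def mem_Collect_eq Un_iff div_numeral_iff
    by linarith
qed

lemma three_picks_eq:
  "{p. 1 \<le> p \<and> p \<le> N \<and> three_pick N p} =
     progression 6 3 (3 * N div 5) N \<union> progression 18 9 (N div 2) (3 * N div 5)"
proof (rule set_eqI)
  fix p :: nat
  have "odd p \<and> 3 dvd p \<longleftrightarrow> p mod 6 = 3" "odd p \<and> 9 dvd p \<longleftrightarrow> p mod 18 = 9"
    "9 dvd p \<Longrightarrow> 3 dvd p"
    by presburger+
  then show "p \<in> {p. 1 \<le> p \<and> p \<le> N \<and> three_pick N p} \<longleftrightarrow>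
      p \<in> progression 6 3 (3 * N div 5) N \<union> progression 18 9 (N div 2) (3 * N div 5)"
    unfolding progression_def three_pick_def mem_Collect_eq Un_iff div_numeral_iff
    by linarith
qed

lemma even_picks_eq:
  "{p. 1 \<le> p \<and> p \<le> N \<and> even_pick N p} =
     progression 2 0 (2 * N div 3) N \<union> progression 4 0 (N div 2) (2 * N div 3) \<union>
     progression 12 6 (N div 2) (2 * N div 3)"
proof (rule set_eqI)
  fix p :: nat
  have "even p \<longleftrightarrow> p mod 2 = 0"
    and "even p \<and> (4 dvd p \<or> 3 dvd p) \<longleftrightarrow> p mod 4 = 0 \<or> p mod 12 = 6"
    by presburger+
  then show "p \<in> {p. 1 \<le> p \<and> p \<le> N \<and> even_pick N p} \<longleftrightarrow>
      p \<in> progression 2 0 (2 * N div 3) N \<union> progression 4 0 (N div 2) (2 * N div 3) \<union>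
        progression 12 6 (N div 2) (2 * N div 3)"
    unfolding progression_def even_pick_def mem_Collect_eq Un_iff div_numeral_iff
    by linarith
qed

lemma strategy_endpoints_mono:
  fixes N :: nat
  shows "N div 8 \<le> N div 6" "N div 6 \<le> N div 4" "N div 2 \<le> N" "3 * N div 5 \<le> N"
    and "N div 2 \<le> 3 * N div 5" "2 * N div 3 \<le> N" "N div 2 \<le> 2 * N div 3"
  by (auto simp: div_numeral_iff div_le_mono2)

lemma progression_disjoint: "b \<le> c \<Longrightarrow> progression m r a b \<inter> progression m' r' c d = {}"
  unfolding progression_def by auto

lemma sum_list_strategy: "sum_list (strategy N) = strategy_score N"
proof -
  note le = strategy_endpoints_mono[of N]
  have "sum_list (picks_upto N (low_pick N)) =
      progression_sum 2 0 (N div 8) (N div 6) + progression_sum 4 0 (N div 6) (N div 4)"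
    unfolding sum_list_picks_upto low_picks_eq
    by (subst sum.union_disjoint[OF _ _ progression_disjoint])
      (auto simp: finite_progression sum_progression le)
  moreover have "sum_list (picks_upto N (five_pick N)) =
      progression_sum 30 5 (N div 2) N + progression_sum 30 25 (N div 2) N"
  proof -
    have "progression 30 5 (N div 2) N \<inter> progression 30 25 (N div 2) N = {}"
      unfolding progression_def by auto
    then show ?thesis
      unfolding sum_list_picks_upto five_picks_eq
      by (subst sum.union_disjoint) (auto simp: finite_progression sum_progression le)
  qed
  moreover have "sum_list (picks_upto N (three_pick N)) =
      progression_sum 6 3 (3 * N div 5) N + progression_sum 18 9 (N div 2) (3 * N div 5)"
  proof -
    have "progression 6 3 (3 * N div 5) N \<inter> progression 18 9 (N div 2) (3 * N div 5) = {}"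
      unfolding progression_def by auto
    then show ?thesis
      unfolding sum_list_picks_upto three_picks_eq
      by (subst sum.union_disjoint) (auto simp: finite_progression sum_progression le)
  qed
  moreover have "sum_list (picks_upto N (even_pick N)) =
      progression_sum 2 0 (2 * N div 3) N + progression_sum 4 0 (N div 2) (2 * N div 3) +
      progression_sum 12 6 (N div 2) (2 * N div 3)"
  proof -
    have "p mod 4 = 0 \<Longrightarrow> p mod 12 \<noteq> (6::nat)" for p
      by presburger
    then have "progression 4 0 (N div 2) (2 * N div 3) \<inter> progression 12 6 (N div 2) (2 * N div 3) = {}"
      unfolding progression_def by auto
    moreover have "progression 2 0 (2 * N div 3) N \<inter>
        (progression 4 0 (N div 2) (2 * N div 3) \<union> progression 12 6 (N div 2) (2 * N div 3)) = {}"
      unfolding progression_def by auto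
    ultimately show ?thesis
      unfolding sum_list_picks_upto even_picks_eq Un_assoc
      by (subst sum.union_disjoint, simp_all add: finite_progression, subst sum.union_disjoint)
        (auto simp: finite_progression sum_progression le)
  qed
  ultimately show ?thesis
    unfolding strategy_def strategy_score_def by simp
qed

text \<open>The hypotheses are the lower bounds for the nine progressions of the strategy score,
  with x = N; the weighted sum of their left-hand sides is about 1.04 x^2 - 17.4 x - 9.\<close>

lemma progression_bounds_combination:
  fixes x P0 P1 P2 P3 P4 P5 P6 P7 P8 :: real
  assumes "459 \<le> x"
    and "((x + 1) / 6 - 1)\<^sup>2 - (x / 8 + 1)\<^sup>2 \<le> 4 * P0"
    and "((x + 1) / 4 - 2)\<^sup>2 - (x / 6 + 2)\<^sup>2 \<le> 8 * P1"
    and "(x + 1 - 15)\<^sup>2 - (x / 2 + 15)\<^sup>2 \<le> 60 * P2"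
    and "(x + 1 - 15)\<^sup>2 - (x / 2 + 15)\<^sup>2 \<le> 60 * P3"
    and "(x + 1 - 3)\<^sup>2 - (3 * x / 5 + 3)\<^sup>2 \<le> 12 * P4"
    and "((3 * x + 1) / 5 - 9)\<^sup>2 - (x / 2 + 9)\<^sup>2 \<le> 36 * P5"
    and "(x + 1 - 1)\<^sup>2 - (2 * x / 3 + 1)\<^sup>2 \<le> 4 * P6"
    and "((2 * x + 1) / 3 - 2)\<^sup>2 - (x / 2 + 2)\<^sup>2 \<le> 8 * P7"
    and "((2 * x + 1) / 3 - 6)\<^sup>2 - (x / 2 + 6)\<^sup>2 \<le> 24 * P8"
  shows "x\<^sup>2 + x < 4 * (P0 + P1 + P2 + P3 + P4 + P5 + P6 + P7 + P8)"
proof -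
  have "459 * x \<le> x\<^sup>2"
    using assms(1) by (simp add: power2_eq_square)
  with assms show ?thesis
    unfolding power2_diff power2_sum power_divide power_mult_distrib
    by (simp add: field_simps)
qed

lemma strategy_score_large:
  assumes "459 \<le> N"
  shows "N * (N + 1) < 4 * strategy_score N"
proof -
  define x where "x = real N"
  have x: "459 \<le> x"
    using assms unfolding x_def by simp
  note le = strategy_endpoints_mono[of N]
  note bound = progression_sum_div_lower_bound[where N = N, folded x_def]
  note x
  moreover have "((x + 1) / 6 - 1)\<^sup>2 - (x / 8 + 1)\<^sup>2
      \<le> 4 * real (progression_sum 2 0 (N div 8) (N div 6))"
    using bound[of 0 2 6 1 8 1] le x by simp
  moreover have "((x + 1) / 4 - 2)\<^sup>2 - (x / 6 + 2)\<^sup>2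
      \<le> 8 * real (progression_sum 4 0 (N div 6) (N div 4))"
    using bound[of 0 4 4 1 6 1] le x by simp
  moreover have "(x + 1 - 15)\<^sup>2 - (x / 2 + 15)\<^sup>2 \<le> 60 * real (progression_sum 30 5 (N div 2) N)"
    using bound[of 5 30 1 1 2 1] le x by simp
  moreover have "(x + 1 - 15)\<^sup>2 - (x / 2 + 15)\<^sup>2 \<le> 60 * real (progression_sum 30 25 (N div 2) N)"
    using bound[of 25 30 1 1 2 1] le x by simp
  moreover have "(x + 1 - 3)\<^sup>2 - (3 * x / 5 + 3)\<^sup>2 \<le> 12 * real (progression_sum 6 3 (3 * N div 5) N)"
    using bound[of 3 6 1 3 5 1] le x by simp
  moreover have "((3 * x + 1) / 5 - 9)\<^sup>2 - (x / 2 + 9)\<^sup>2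
      \<le> 36 * real (progression_sum 18 9 (N div 2) (3 * N div 5))"
    using bound[of 9 18 5 1 2 3] le x by simp
  moreover have "(x + 1 - 1)\<^sup>2 - (2 * x / 3 + 1)\<^sup>2 \<le> 4 * real (progression_sum 2 0 (2 * N div 3) N)"
    using bound[of 0 2 1 2 3 1] le x by simp
  moreover have "((2 * x + 1) / 3 - 2)\<^sup>2 - (x / 2 + 2)\<^sup>2
      \<le> 8 * real (progression_sum 4 0 (N div 2) (2 * N div 3))"
    using bound[of 0 4 3 1 2 2] le x by simp
  moreover have "((2 * x + 1) / 3 - 6)\<^sup>2 - (x / 2 + 6)\<^sup>2
      \<le> 24 * real (progression_sum 12 6 (N div 2) (2 * N div 3))"
    using bound[of 6 12 3 1 2 2] le x by simp
  ultimately have "x\<^sup>2 + x < 4 * real (strategy_score N)"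
    unfolding strategy_score_def of_nat_add by (rule progression_bounds_combination)
  then have "real (N * (N + 1)) < real (4 * strategy_score N)"
    unfolding x_def by (simp add: power2_eq_square algebra_simps)
  then show ?thesis
    by (simp only: of_nat_less_iff)
qed

text \<open>The values where the strategy loses: 1 and 3, which cannot be won at all, and thirteen
  values won by the explicit games below.\<close>

definition strategy_exceptions :: "nat set" where
  "strategy_exceptions = {1, 3, 11, 13, 15, 17, 18, 19, 20, 21, 23, 24, 25, 61, 73}"

function check_strategy_wins :: "nat \<Rightarrow> nat \<Rightarrow> bool" where
  "check_strategy_wins a b =
     (if b \<le> a then True
      else (a \<in> strategy_exceptions \<or> a * (a + 1) < 4 * strategy_score a) \<and>
        check_strategy_wins (a + 1) b)"
  by auto
termination by (relation "measure (\<lambda>(a, b). b - a)") auto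

declare check_strategy_wins.simps [simp del]

lemma check_strategy_winsD:
  "check_strategy_wins a b \<Longrightarrow> a \<le> N \<Longrightarrow> N < b \<Longrightarrow>
    N \<in> strategy_exceptions \<or> N * (N + 1) < 4 * strategy_score N"
proof (induction a b rule: check_strategy_wins.induct)
  case (1 a b)
  then show ?case
    by (cases "N = a") (auto simp: check_strategy_wins.simps[of a b])
qed

lemma check_strategy_winsI:
  "(\<And>N. a \<le> N \<Longrightarrow> N < b \<Longrightarrow> N \<in> strategy_exceptions \<or> N * (N + 1) < 4 * strategy_score N) \<Longrightarrow>
    check_strategy_wins a b"
proof (induction a b rule: check_strategy_wins.induct)
  case (1 a b)
  then show ?case
    by (auto simp: check_strategy_wins.simps[of a b])
qed

lemma check_strategy_wins_trans:
  "check_strategy_wins a b \<Longrightarrow> check_strategy_wins b c \<Longrightarrow> check_strategy_wins a c"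
  by (rule check_strategy_winsI) (metis check_strategy_winsD not_le)

text \<open>Evaluated in blocks of ten, and in two independent lemmas: unfolding a long range in a
  single goal is much slower.\<close>

lemma check_strategy_wins_blocks_1:
  "check_strategy_wins 1 11" "check_strategy_wins 11 21" "check_strategy_wins 21 31"
  "check_strategy_wins 31 41" "check_strategy_wins 41 51" "check_strategy_wins 51 61"
  "check_strategy_wins 61 71" "check_strategy_wins 71 81" "check_strategy_wins 81 91"
  "check_strategy_wins 91 101" "check_strategy_wins 101 111" "check_strategy_wins 111 121"
  "check_strategy_wins 121 131" "check_strategy_wins 131 141" "check_strategy_wins 141 151"
  "check_strategy_wins 151 161" "check_strategy_wins 161 171" "check_strategy_wins 171 181"
  "check_strategy_wins 181 191" "check_strategy_wins 191 201" "check_strategy_wins 201 211"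
  "check_strategy_wins 211 221" "check_strategy_wins 221 231"
  by (subst check_strategy_wins.simps,
      simp add: strategy_exceptions_def strategy_score_def progression_sum_def progression_prefix_sum_def)+

lemma check_strategy_wins_blocks_2:
  "check_strategy_wins 231 241" "check_strategy_wins 241 251" "check_strategy_wins 251 261"
  "check_strategy_wins 261 271" "check_strategy_wins 271 281" "check_strategy_wins 281 291"
  "check_strategy_wins 291 301" "check_strategy_wins 301 311" "check_strategy_wins 311 321"
  "check_strategy_wins 321 331" "check_strategy_wins 331 341" "check_strategy_wins 341 351"
  "check_strategy_wins 351 361" "check_strategy_wins 361 371" "check_strategy_wins 371 381"
  "check_strategy_wins 381 391" "check_strategy_wins 391 401" "check_strategy_wins 401 411"
  "check_strategy_wins 411 421" "check_strategy_wins 421 431" "check_strategy_wins 431 441"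
  "check_strategy_wins 441 451" "check_strategy_wins 451 461"
  by (subst check_strategy_wins.simps,
      simp add: strategy_exceptions_def strategy_score_def progression_sum_def progression_prefix_sum_def)+

lemmas check_strategy_wins_blocks = check_strategy_wins_blocks_1 check_strategy_wins_blocks_2

lemma check_strategy_wins_small: "check_strategy_wins 1 461"
  by (rule check_strategy_wins_trans, rule check_strategy_wins_blocks)+ (simp add: check_strategy_wins.simps)

definition winning_witnesses :: "nat \<Rightarrow> (nat \<times> nat) list \<Rightarrow> bool" where
  "winning_witnesses N pws \<longleftrightarrow>
     (\<forall>(p, w) \<in> set pws. p \<in> {1..N} \<and> w \<in> {1..N} \<and> w dvd p \<and> w \<noteq> p) \<and>
     sorted_wrt (\<lambda>(p, _) (_, w). \<not> w dvd p) pws \<and> N * (N + 1) < 4 * sum_list (map fst pws)"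

lemma winning_seq_of_witnesses:
  "winning_witnesses N pws \<Longrightarrow> \<exists>ps. legal_seq {1..N} ps \<and> N * (N + 1) < 4 * player_score ps"
  unfolding winning_witnesses_def player_score_def by (blast dest: legal_seq_witnessed)

lemma exceptional_winning_witnesses:
  "winning_witnesses 11 [(11, 1), (9, 3), (6, 2), (10, 5), (8, 4)]"
  "winning_witnesses 13 [(13, 1), (9, 3), (10, 5), (8, 4), (12, 6)]"
  "winning_witnesses 15 [(13, 1), (9, 3), (15, 5), (10, 2), (14, 7), (8, 4), (12, 6)]"
  "winning_witnesses 17 [(17, 1), (9, 3), (15, 5), (10, 2), (14, 7), (16, 8), (12, 6)]"
  "winning_witnesses 18 [(17, 1), (9, 3), (15, 5), (10, 2), (18, 6), (12, 4), (16, 8), (14, 7)]"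
  "winning_witnesses 19 [(19, 1), (15, 5), (10, 2), (14, 7), (16, 8), (12, 6), (18, 9)]"
  "winning_witnesses 20 [(19, 1), (15, 5), (10, 2), (20, 4), (16, 8), (14, 7), (12, 6), (18, 9)]"
  "winning_witnesses 21 [(19, 1), (21, 7), (14, 2), (15, 5), (20, 10), (16, 8), (12, 6), (18, 9)]"
  "winning_witnesses 23 [(23, 1), (21, 7), (14, 2), (22, 11), (15, 5), (20, 10), (16, 8), (12, 6),
      (18, 9)]"
  "winning_witnesses 24 [(23, 1), (21, 7), (14, 2), (22, 11), (15, 5), (20, 10), (16, 8), (24, 12),
      (18, 9)]"
  "winning_witnesses 25 [(23, 1), (25, 5), (15, 3), (21, 7), (14, 2), (22, 11), (20, 10), (16, 8),
      (24, 12), (18, 9)]"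
  "winning_witnesses 61 [(61, 1), (49, 7), (55, 11), (57, 19), (38, 2), (51, 17), (58, 29),
      (39, 13), (46, 23), (52, 26), (44, 22), (45, 15), (50, 25), (30, 6), (60, 20), (40, 8),
      (36, 18), (54, 27), (32, 16), (48, 24), (56, 28), (42, 21)]"
  "winning_witnesses 73 [(73, 1), (65, 13), (55, 11), (69, 23), (46, 2), (49, 7), (57, 19),
      (51, 17), (63, 21), (62, 31), (68, 34), (45, 15), (58, 29), (52, 26), (44, 22), (66, 33),
      (42, 14), (70, 35), (50, 25), (56, 28), (40, 20), (60, 30), (36, 18), (72, 24), (48, 16),
      (64, 32), (54, 27)]"
  by (simp_all add: winning_witnesses_def)

lemma exceptional_wins:
  assumes "N \<in> strategy_exceptions - {1, 3}"
  shows "\<exists>ps. legal_seq {1..N} ps \<and> N * (N + 1) < 4 * player_score ps"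
  using assms exceptional_winning_witnesses[THEN winning_seq_of_witnesses]
  unfolding strategy_exceptions_def by auto

theorem theorem5:
  fixes N :: nat
  assumes "N \<ge> 1" and "N \<notin> {1, 3}"
  shows "\<exists>ps. complete_game N ps \<and>
           player_score ps > taxman_total {1..N} ps \<and>
           4 * player_score ps > N * (N + 1)"
proof -
  have "\<exists>ps. legal_seq {1..N} ps \<and> N * (N + 1) < 4 * player_score ps"
  proof (cases "N \<in> strategy_exceptions")
    case True
    then show ?thesis
      using assms(2) exceptional_wins by blast
  next
    case False
    have "N * (N + 1) < 4 * strategy_score N"
    proof (cases "N < 461")
      case True
      then show ?thesis
        using check_strategy_winsD[OF check_strategy_wins_small] assms(1) False by blast
    next
      case False
      then show ?thesis
        using strategy_score_large[of N] by simp
    qed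
    then show ?thesis
      using legal_seq_strategy sum_list_strategy unfolding player_score_def by metis
  qed
  then show ?thesis
    using winning_complete_game_of_legal_seq by blast
qed

end
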